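(* Let $\delta>0$ and let $n_\delta\in C^\infty(\mathbb{R})$ satisfy: $n_\delta(r)=r-2\delta$ for $r>\delta$; $n_\delta(r)=n_\delta(-r)$ for all $r$; $0\le n_\delta'(r)\le1$ for $r\ge0$; $0\le n_\delta''\le C_5/\delta$ for some constant $C_5>0$. Let $X=L^p(0,T;W_0^{1,p}(D))$ with dual $X'=L^{p'}(0,T;W^{-1,p'}(D))$, and let $u,v\in X$ with $u\ge0$, $v\ge0$ a.e. in $Q_T$. Let $\eta\in X'$ be nonnegative (i.e. $\langle\eta,\varphi\rangle_{X',X}\ge0$ for all $\varphi\in X$ with $\varphi\ge0$ a.e.) and satisfy $\langle\eta,u\rangle_{X',X}=0$. Then $n_\delta'(u-v)\in X$ and $$\langle\eta,n_\delta'(u-v)\rangle_{X',X}\le0.$$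
   Context: $D\subset\mathbb{R}^d$ is a bounded Lipschitz domain, $T>0$, $Q_T=(0,T)\times D$, $p\ge2$, $p'=p/(p-1)$; $W_0^{1,p}(D)$ is the closure of $C_c^\infty(D)$ in $W^{1,p}(D)$ and $W^{-1,p'}(D)$ its dual. *)

theory Defs
  imports "HOL-Analysis.Analysis"
begin

(* Locally near each boundary point, after choosing a unit "vertical" direction e,
   D is the region below the graph of a Lipschitz function gamma that only depends
   on the component orthogonal to e. *)
definition lipschitz_domain :: "'a::euclidean_space set \<Rightarrow> bool" where
  "lipschitz_domain D \<longleftrightarrow> open D \<and> bounded D \<and> D \<noteq> {} \<and>
     (\<forall>x0\<in>frontier D. \<exists>r>0. \<exists>e. norm e = 1 \<and> (\<exists>L \<gamma>.
        L-lipschitz_on UNIV (\<gamma> :: 'a \<Rightarrow> real) \<and>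
        (\<forall>y s. \<gamma> (y + s *\<^sub>R e) = \<gamma> y) \<and>
        D \<inter> ball x0 r = {y \<in> ball x0 r. y \<bullet> e < \<gamma> y}))"

fun dpart :: "('a::euclidean_space \<Rightarrow> real) \<Rightarrow> 'a list \<Rightarrow> 'a \<Rightarrow> real" where
  "dpart f [] = f"
| "dpart f (i # is) = (\<lambda>x. frechet_derivative (dpart f is) (at x) i)"

definition smooth_fun :: "('a::euclidean_space \<Rightarrow> real) \<Rightarrow> bool" where
  "smooth_fun f \<longleftrightarrow> (\<forall>is. set is \<subseteq> Basis \<longrightarrow> (\<forall>x. dpart f is differentiable (at x)))"

definition test_fun :: "'a::euclidean_space set \<Rightarrow> ('a \<Rightarrow> real) \<Rightarrow> bool" where
  "test_fun D \<phi> \<longleftrightarrow> smooth_fun \<phi> \<and> (\<exists>K. compact K \<and> K \<subseteq> D \<and> (\<forall>x. x \<notin> K \<longrightarrow> \<phi> x = 0))"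

definition grad :: "('a::euclidean_space \<Rightarrow> real) \<Rightarrow> 'a \<Rightarrow> 'a" where
  "grad \<phi> x = (\<Sum>i\<in>Basis. frechet_derivative \<phi> (at x) i *\<^sub>R i)"

definition Lp :: "'b measure \<Rightarrow> real \<Rightarrow> ('b \<Rightarrow> 'c::real_normed_vector) \<Rightarrow> bool" where
  "Lp M p f \<longleftrightarrow> f \<in> borel_measurable M \<and> integrable M (\<lambda>x. norm (f x) powr p)"

definition weak_grad :: "'a::euclidean_space set \<Rightarrow> ('a \<Rightarrow> real) \<Rightarrow> ('a \<Rightarrow> 'a) \<Rightarrow> bool" where
  "weak_grad D f g \<longleftrightarrow>
     (\<forall>\<phi>. test_fun D \<phi> \<longrightarrow> (\<forall>i\<in>Basis.
        (\<integral>x. f x * frechet_derivative \<phi> (at x) i \<partial>lebesgue_on D)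
        = - (\<integral>x. (g x \<bullet> i) * \<phi> x \<partial>lebesgue_on D)))"

definition W0 :: "'a::euclidean_space set \<Rightarrow> real \<Rightarrow> ('a \<Rightarrow> real) \<Rightarrow> ('a \<Rightarrow> 'a) \<Rightarrow> bool" where
  "W0 D p f g \<longleftrightarrow> Lp (lebesgue_on D) p f \<and> Lp (lebesgue_on D) p g \<and> weak_grad D f g \<and>
     (\<exists>\<phi>. (\<forall>k. test_fun D (\<phi> k)) \<and>
        (\<lambda>k. (\<integral>x. \<bar>\<phi> k x - f x\<bar> powr p \<partial>lebesgue_on D)
            + (\<integral>x. norm (grad (\<phi> k) x - g x) powr p \<partial>lebesgue_on D)) \<longlonglongrightarrow> 0)"

definition QT :: "real \<Rightarrow> 'a set \<Rightarrow> (real \<times> 'a) set" where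
  "QT T D = {0<..<T} \<times> D"

(* u \<in> X = L^p(0,T;W_0^{1,p}(D)), represented as a function on Q_T, with spatial
   weak gradient G *)
definition Xrep :: "'a::euclidean_space set \<Rightarrow> real \<Rightarrow> real \<Rightarrow> (real \<times> 'a \<Rightarrow> real) \<Rightarrow> (real \<times> 'a \<Rightarrow> 'a) \<Rightarrow> bool" where
  "Xrep D T p u G \<longleftrightarrow> Lp (lebesgue_on (QT T D)) p u \<and> Lp (lebesgue_on (QT T D)) p G \<and>
     (AE t in lebesgue_on {0<..<T}. W0 D p (\<lambda>x. u (t, x)) (\<lambda>x. G (t, x)))"

definition Xmem :: "'a::euclidean_space set \<Rightarrow> real \<Rightarrow> real \<Rightarrow> (real \<times> 'a \<Rightarrow> real) \<Rightarrow> bool" where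
  "Xmem D T p u \<longleftrightarrow> (\<exists>G. Xrep D T p u G)"

definition Xnorm :: "'a::euclidean_space set \<Rightarrow> real \<Rightarrow> real \<Rightarrow> (real \<times> 'a \<Rightarrow> real) \<Rightarrow> (real \<times> 'a \<Rightarrow> 'a) \<Rightarrow> real" where
  "Xnorm D T p u G = ((\<integral>z. \<bar>u z\<bar> powr p \<partial>lebesgue_on (QT T D))
                      + (\<integral>z. norm (G z) powr p \<partial>lebesgue_on (QT T D))) powr (1 / p)"

(* \<eta> \<in> X' : bounded linear functional on X; \<eta> u is the pairing <\<eta>,u>_{X',X} *)
definition Xdual :: "'a::euclidean_space set \<Rightarrow> real \<Rightarrow> real \<Rightarrow> ((real \<times> 'a \<Rightarrow> real) \<Rightarrow> real) \<Rightarrow> bool" where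
  "Xdual D T p \<eta> \<longleftrightarrow>
     (\<forall>u v a b. Xmem D T p u \<and> Xmem D T p v \<longrightarrow>
        \<eta> (\<lambda>z. a * u z + b * v z) = a * \<eta> u + b * \<eta> v) \<and>
     (\<exists>C. \<forall>u G. Xrep D T p u G \<longrightarrow> \<bar>\<eta> u\<bar> \<le> C * Xnorm D T p u G)"

definition smooth_real :: "(real \<Rightarrow> real) \<Rightarrow> bool" where
  "smooth_real f \<longleftrightarrow> (\<forall>k x. (deriv ^^ k) f differentiable (at x))"

end

(* As n is even, m = n' is smooth with m 0 = 0, and 0 <= m' <= C5/delta makes m nondecreasing
   and (C5/delta)-Lipschitz.  A chain rule in W_0^{1,p}(D), obtained by composing approximating
   test functions with m and passing to the limit, puts m (u - v) into X.  For u, v >= 0 we have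
   m (u - v) <= m u <= (C5/delta) u, so positivity of eta applied to (C5/delta) u - m (u - v),
   together with <eta, u> = 0, gives <eta, m (u - v)> <= 0. *)

theory Submission
  imports Defs
begin

section \<open>Smooth functions\<close>

lemma dpart_append: "dpart f (xs @ ys) = dpart (dpart f ys) xs"
  by (induction xs) auto

lemma smooth_fun_differentiable: "smooth_fun f \<Longrightarrow> f differentiable (at x)"
  unfolding smooth_fun_def by (metis dpart.simps(1) empty_subsetI list.set(1))

lemma smooth_fun_has_derivative:
  "smooth_fun f \<Longrightarrow> (f has_derivative frechet_derivative f (at x)) (at x)"
  using smooth_fun_differentiable frechet_derivative_works by blast

lemma smooth_fun_continuous_on: "smooth_fun f \<Longrightarrow> continuous_on S f"
  by (intro continuous_at_imp_continuous_on ballI differentiable_imp_continuous_within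
      smooth_fun_differentiable)

lemma smooth_fun_partial:
  assumes "smooth_fun f" "i \<in> Basis"
  shows "smooth_fun (\<lambda>x. frechet_derivative f (at x) i)"
  unfolding smooth_fun_def
proof (intro allI impI)
  fix "is" :: "'a list" and x assume "set is \<subseteq> Basis"
  then have "dpart f (is @ [i]) differentiable (at x)"
    using assms unfolding smooth_fun_def by simp
  then show "dpart (\<lambda>x. frechet_derivative f (at x) i) is differentiable (at x)"
    by (simp add: dpart_append)
qed

lemma smooth_fun_partial_continuous_on:
  "smooth_fun f \<Longrightarrow> i \<in> Basis \<Longrightarrow> continuous_on S (\<lambda>x. frechet_derivative f (at x) i)"
  by (rule smooth_fun_continuous_on[OF smooth_fun_partial])

lemma smooth_fun_const: "smooth_fun (\<lambda>x. c)"
proof -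
  have "dpart (\<lambda>x. c) is = (\<lambda>x. if is = [] then c else 0)" for "is" :: "'a list"
    by (induction "is") auto
  then show ?thesis unfolding smooth_fun_def by simp
qed

lemma smooth_real_deriv: "smooth_real g \<Longrightarrow> smooth_real (deriv g)"
  unfolding smooth_real_def by (metis funpow_Suc_right o_apply)

lemma smooth_real_has_deriv: "smooth_real g \<Longrightarrow> (g has_real_derivative deriv g x) (at x)"
  unfolding smooth_real_def by (metis DERIV_deriv_iff_real_differentiable funpow_0)

lemma smooth_real_continuous_on: "smooth_real g \<Longrightarrow> continuous_on S g"
  by (meson DERIV_isCont continuous_at_imp_continuous_on smooth_real_has_deriv)

lemma has_derivative_smooth_real_comp:
  assumes "smooth_real g" "(h has_derivative h') (at x)"
  shows "((\<lambda>x. g (h x)) has_derivative (\<lambda>v. deriv g (h x) * h' v)) (at x)"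
  using diff_chain_at[OF assms(2) smooth_real_has_deriv[OF assms(1), unfolded has_field_derivative_def]]
  by (simp add: o_def)

lemma frechet_derivative_partial_eq:
  "(\<And>x. (f has_derivative f' x) (at x)) \<Longrightarrow> (\<lambda>x. frechet_derivative f (at x) i) = (\<lambda>x. f' x i)"
  by (metis frechet_derivative_at)

text \<open>This class is closed under partial derivatives by the product and chain rules, hence consists of
  smooth functions; that gives the closure properties of \<open>smooth_fun\<close> below at once.\<close>

inductive_set smooth_closure :: "('a::euclidean_space \<Rightarrow> real) set" where
  smooth: "smooth_fun f \<Longrightarrow> f \<in> smooth_closure"
| comp: "smooth_real g \<Longrightarrow> smooth_fun h \<Longrightarrow> (\<lambda>x. g (h x)) \<in> smooth_closure"
| mult: "f \<in> smooth_closure \<Longrightarrow> g \<in> smooth_closure \<Longrightarrow> (\<lambda>x. f x * g x) \<in> smooth_closure"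
| add: "f \<in> smooth_closure \<Longrightarrow> g \<in> smooth_closure \<Longrightarrow> (\<lambda>x. f x + g x) \<in> smooth_closure"

lemma smooth_closure_partial:
  assumes "f \<in> smooth_closure"
  shows "(\<forall>x. f differentiable (at x)) \<and>
    (\<forall>i\<in>Basis. (\<lambda>x. frechet_derivative f (at x) i) \<in> smooth_closure)"
  using assms
proof (induction rule: smooth_closure.induct)
  case (smooth f)
  then show ?case
    by (auto intro: smooth_closure.smooth smooth_fun_partial smooth_fun_differentiable)
next
  case (comp g h)
  note D = has_derivative_smooth_real_comp[OF comp(1) smooth_fun_has_derivative[OF comp(2)]]
  show ?case
  proof (intro conjI allI ballI)
    show "(\<lambda>x. g (h x)) differentiable (at x)" for x using D by (rule differentiableI)
    fix i :: 'a assume "i \<in> Basis"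
    then show "(\<lambda>x. frechet_derivative (\<lambda>x. g (h x)) (at x) i) \<in> smooth_closure"
      unfolding frechet_derivative_partial_eq[OF D]
      by (intro smooth_closure.mult[OF smooth_closure.comp smooth_closure.smooth] smooth_real_deriv
          smooth_fun_partial comp)
  qed
next
  case (mult f g)
  have D: "((\<lambda>x. f x * g x) has_derivative (\<lambda>v. f x * frechet_derivative g (at x) v
      + frechet_derivative f (at x) v * g x)) (at x)" for x
    using mult.IH by (intro has_derivative_mult) (simp_all add: frechet_derivative_works[symmetric])
  show ?case
    unfolding frechet_derivative_partial_eq[OF D]
    using mult by (auto intro!: differentiableI[OF D] smooth_closure.add smooth_closure.mult)
next
  case (add f g)
  have D: "((\<lambda>x. f x + g x) has_derivative (\<lambda>v. frechet_derivative f (at x) v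
      + frechet_derivative g (at x) v)) (at x)" for x
    using add.IH by (intro has_derivative_add) (simp_all add: frechet_derivative_works[symmetric])
  show ?case
    unfolding frechet_derivative_partial_eq[OF D]
    using add.IH by (auto intro!: differentiableI[OF D] smooth_closure.add)
qed

lemma smooth_closure_smooth:
  assumes "f \<in> smooth_closure" shows "smooth_fun f"
proof -
  have "set is \<subseteq> Basis \<Longrightarrow> dpart f is \<in> smooth_closure" for "is"
    by (induction "is") (use assms smooth_closure_partial in auto)
  then show ?thesis
    unfolding smooth_fun_def using smooth_closure_partial by blast
qed

lemma smooth_fun_mult:
  assumes "smooth_fun f" "smooth_fun g"
  shows "smooth_fun (\<lambda>x. f x * g x)"
  using smooth_closure.mult[OF assms[THEN smooth_closure.smooth]] by (rule smooth_closure_smooth)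

lemma smooth_fun_lincomb:
  assumes "smooth_fun f" "smooth_fun g"
  shows "smooth_fun (\<lambda>x. a * f x + b * g x)"
  by (rule smooth_closure_smooth, intro smooth_closure.add smooth_closure.mult;
      rule smooth_closure.smooth; intro assms smooth_fun_const)

lemma smooth_fun_comp:
  assumes "smooth_real g" "smooth_fun h"
  shows "smooth_fun (\<lambda>x. g (h x))"
  using smooth_closure.comp[OF assms] by (rule smooth_closure_smooth)

lemma even_has_real_derivative_0:
  fixes f :: "real \<Rightarrow> real"
  assumes d: "(f has_real_derivative d) (at 0)" and even: "\<And>x. f (- x) = f x"
  shows "d = 0"
proof -
  have "((\<lambda>x. f (- x)) has_real_derivative - d) (at 0)"
    using d by (simp flip: DERIV_mirror)
  then have "(f has_real_derivative - d) (at 0)" by (simp add: even)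
  with d have "d = - d" by (rule DERIV_unique)
  then show ?thesis by simp
qed

lemma lipschitz_of_deriv_bound:
  fixes m :: "real \<Rightarrow> real"
  assumes "smooth_real m" "\<And>r. \<bar>deriv m r\<bar> \<le> c"
  shows "\<bar>m a - m b\<bar> \<le> c * \<bar>a - b\<bar>"
  using field_differentiable_bound[of UNIV m "deriv m" c a b] assms
  by (auto intro: has_field_derivative_at_within smooth_real_has_deriv)

lemma compact_support_bounded:
  fixes f :: "'a::euclidean_space \<Rightarrow> 'b::real_normed_vector"
  assumes "continuous_on UNIV f" "compact K" "\<And>x. x \<notin> K \<Longrightarrow> f x = 0"
  shows "\<exists>B. \<forall>x. norm (f x) \<le> B"
proof -
  have "compact (f ` K)"
    by (rule compact_continuous_image) (use assms in \<open>auto intro: continuous_on_subset\<close>)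
  then obtain b where b: "\<And>y. y \<in> f ` K \<Longrightarrow> norm y \<le> b"
    using compact_imp_bounded bounded_pos by metis
  have "norm (f x) \<le> max b 0" for x using b assms(3)[of x] by (cases "x \<in> K") force+
  then show ?thesis by blast
qed

lemma integrable_compact_support:
  fixes f :: "'a::euclidean_space \<Rightarrow> 'b::{banach, second_countable_topology}"
  assumes "continuous_on UNIV f" "compact K" "\<And>x. x \<notin> K \<Longrightarrow> f x = 0"
  shows "integrable lborel f"
proof -
  have "integrable lborel (\<lambda>x. indicator K x *\<^sub>R f x)"
    by (rule borel_integrable_compact) (use assms in \<open>auto intro: continuous_on_subset\<close>)
  moreover have "(\<lambda>x. indicator K x *\<^sub>R f x) = f"
    using assms(3) by (auto simp: fun_eq_iff indicator_def)
  ultimately show ?thesis by simp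
qed

lemma frechet_derivative_outside_support:
  assumes "closed K" "\<And>x. x \<notin> K \<Longrightarrow> F x = 0" "x \<notin> K"
  shows "frechet_derivative F (at x) = (\<lambda>_. 0)"
proof -
  have "(F has_derivative (\<lambda>_. 0)) (at x)"
    by (rule has_derivative_transform_within_open[OF has_derivative_const, of "- K"])
       (use assms in auto)
  then show ?thesis by (rule frechet_derivative_at[symmetric])
qed

section \<open>Integration by parts\<close>

lemma has_real_derivative_along_line:
  assumes "F differentiable (at (x + t *\<^sub>R i))"
  shows "((\<lambda>s. F (x + s *\<^sub>R i)) has_real_derivative frechet_derivative F (at (x + t *\<^sub>R i)) i) (at t)"
proof -
  let ?F' = "frechet_derivative F (at (x + t *\<^sub>R i))"
  have F: "(F has_derivative ?F') (at (x + t *\<^sub>R i))"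
    using assms frechet_derivative_works by blast
  have "((\<lambda>s. x + s *\<^sub>R i) has_derivative (\<lambda>s. s *\<^sub>R i)) (at t)"
    by (auto intro!: derivative_eq_intros)
  from diff_chain_at[OF this F]
  have "((\<lambda>s. F (x + s *\<^sub>R i)) has_derivative (\<lambda>s. ?F' (s *\<^sub>R i))) (at t)" by (simp add: o_def)
  moreover have "(\<lambda>s. ?F' (s *\<^sub>R i)) = (*) (?F' i)"
    using linear_cmul[OF has_derivative_linear[OF F]] by (auto simp: fun_eq_iff)
  ultimately show ?thesis by (simp add: has_field_derivative_def)
qed

lemma lborel_integral_translate:
  fixes F :: "'a::euclidean_space \<Rightarrow> 'b::{banach, second_countable_topology}"
  assumes "integrable lborel F"
  shows "integrable lborel (\<lambda>x. F (x + c))" "integral\<^sup>L lborel (\<lambda>x. F (x + c)) = integral\<^sup>L lborel F"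
proof -
  have plus: "(+) c \<in> measurable lborel borel"
    using borel_measurable_continuous_onI[of "(+) c"] continuous_on_add[OF continuous_on_const continuous_on_id]
    by simp
  have F: "F \<in> borel_measurable borel" using assms by simp
  have "integrable (distr lborel borel ((+) c)) F" using assms by (simp add: lborel_distr_plus)
  then show "integrable lborel (\<lambda>x. F (x + c))"
    by (subst (asm) integrable_distr_eq[OF plus F]) (simp add: add.commute)
  have "integral\<^sup>L lborel F = integral\<^sup>L (distr lborel borel ((+) c)) F" by (simp add: lborel_distr_plus)
  also have "\<dots> = integral\<^sup>L lborel (\<lambda>x. F (x + c))"
    by (subst integral_distr[OF plus F]) (simp add: add.commute)
  finally show "integral\<^sup>L lborel (\<lambda>x. F (x + c)) = integral\<^sup>L lborel F" ..
qed

lemma difference_quotient_bound: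
  fixes F :: "'a::euclidean_space \<Rightarrow> real"
  assumes F: "smooth_fun F" and K: "K \<subseteq> cball 0 R" "\<And>x. x \<notin> K \<Longrightarrow> F x = 0"
    and i: "i \<in> Basis" and B: "\<And>x. \<bar>frechet_derivative F (at x) i\<bar> \<le> B"
    and h: "0 < h" "h \<le> 1"
  shows "\<bar>(F (x + h *\<^sub>R i) - F x) / h\<bar> \<le> indicator (cball 0 (R + 1)) x * B"
proof (cases "x \<in> cball 0 (R + 1)")
  case True
  obtain t where "F (x + h *\<^sub>R i) - F (x + 0 *\<^sub>R i) = (h - 0) * frechet_derivative F (at (x + t *\<^sub>R i)) i"
    using MVT2[of 0 h "\<lambda>s. F (x + s *\<^sub>R i)" "\<lambda>t. frechet_derivative F (at (x + t *\<^sub>R i)) i"] h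
      has_real_derivative_along_line smooth_fun_differentiable[OF F] by blast
  then show ?thesis using True h B[of "x + t *\<^sub>R i"] by (simp add: abs_mult)
next
  case False
  have "norm (x + h *\<^sub>R i) \<ge> norm x - h" using norm_triangle_ineq2[of x "- h *\<^sub>R i"] h i by simp
  then have "x + h *\<^sub>R i \<notin> K" "x \<notin> K" using False K(1) h by auto
  then show ?thesis using False K(2) by simp
qed

lemma difference_quotient_tendsto:
  assumes "F differentiable (at x)" "filterlim h (at 0) sequentially"
  shows "(\<lambda>m. (F (x + h m *\<^sub>R i) - F x) / h m) \<longlonglongrightarrow> frechet_derivative F (at x) i"
proof -
  have "((\<lambda>s. F (x + s *\<^sub>R i)) has_real_derivative frechet_derivative F (at x) i) (at 0)"
    using has_real_derivative_along_line[of F x 0 i] assms(1) by simp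
  then have "((\<lambda>s. (F (x + s *\<^sub>R i) - F x) / s) \<longlongrightarrow> frechet_derivative F (at x) i) (at 0)"
    by (simp add: has_field_derivative_iff)
  from filterlim_compose[OF this assms(2)] show ?thesis by simp
qed

text \<open>Difference quotients have integral zero by translation invariance of \<open>lborel\<close>, and they
  converge to the partial derivative dominatedly.\<close>

lemma integral_partial_compact_support:
  fixes F :: "'a::euclidean_space \<Rightarrow> real"
  assumes F: "smooth_fun F" and K: "compact K" "\<And>x. x \<notin> K \<Longrightarrow> F x = 0" and i: "i \<in> Basis"
  shows "integral\<^sup>L lborel (\<lambda>x. frechet_derivative F (at x) i) = 0"
proof -
  define dF where "dF x = frechet_derivative F (at x) i" for x
  define h where "h m = 1 / real (Suc m)" for m
  define q where "q m x = (F (x + h m *\<^sub>R i) - F x) / h m" for m x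
  have h: "0 < h m" "h m \<le> 1" for m unfolding h_def by (auto simp: field_simps)
  have cF: "continuous_on UNIV F" by (rule smooth_fun_continuous_on[OF F])
  have cdF: "continuous_on UNIV dF" unfolding dF_def by (rule smooth_fun_partial_continuous_on[OF F i])
  have dF0: "x \<notin> K \<Longrightarrow> dF x = 0" for x
    unfolding dF_def using frechet_derivative_outside_support[OF compact_imp_closed[OF K(1)] K(2)] by simp
  obtain B where B: "\<And>x. \<bar>dF x\<bar> \<le> B" using compact_support_bounded[OF cdF K(1) dF0] by auto
  obtain R where R: "K \<subseteq> cball 0 R"
    using compact_imp_bounded[OF K(1)] by (meson bounded_pos mem_cball_0 subsetI)
  have q_int: "integral\<^sup>L lborel (q m) = 0" for m
  proof -
    have Fi: "integrable lborel F" by (rule integrable_compact_support[OF cF K])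
    show ?thesis
      unfolding q_def using lborel_integral_translate[OF Fi, of "h m *\<^sub>R i"] Fi by simp
  qed
  have "filterlim h (at 0) sequentially"
    unfolding filterlim_at using h LIMSEQ_inverse_real_of_nat unfolding h_def
    by (auto simp: inverse_eq_divide intro!: always_eventually)
  then have q_lim: "(\<lambda>m. q m x) \<longlonglongrightarrow> dF x" for x
    unfolding q_def dF_def by (rule difference_quotient_tendsto[OF smooth_fun_differentiable[OF F]])
  have "(\<lambda>m. integral\<^sup>L lborel (q m)) \<longlonglongrightarrow> integral\<^sup>L lborel dF"
  proof (rule integral_dominated_convergence[where w = "\<lambda>x. indicator (cball 0 (R + 1)) x * B"])
    show "dF \<in> borel_measurable lborel" using cdF borel_measurable_continuous_onI by simp
    have [measurable]: "F \<in> borel_measurable borel" using cF by (rule borel_measurable_continuous_onI)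
    show "q m \<in> borel_measurable lborel" for m unfolding q_def by measurable
    show "integrable lborel (\<lambda>x. indicator (cball 0 (R + 1)) x * B)"
      using borel_integrable_compact[of "cball 0 (R + 1)" "\<lambda>_. B"] by (simp add: mult.commute)
    show "AE x in lborel. (\<lambda>m. q m x) \<longlonglongrightarrow> dF x" using q_lim by simp
    show "AE x in lborel. norm (q m x) \<le> indicator (cball 0 (R + 1)) x * B" for m
      using difference_quotient_bound[OF F R K(2) i B[unfolded dF_def] h] unfolding q_def by simp
  qed
  then have "(\<lambda>m. 0) \<longlonglongrightarrow> integral\<^sup>L lborel dF" by (simp add: q_int)
  then show ?thesis unfolding dF_def by (simp add: LIMSEQ_const_iff)
qed

section \<open>Lebesgue spaces\<close>

lemma powr_add_le:
  fixes x y p :: real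
  assumes "0 \<le> x" "0 \<le> y" "0 < p"
  shows "(x + y) powr p \<le> 2 powr p * (x powr p + y powr p)"
proof -
  have "(x + y) powr p \<le> (2 * max x y) powr p"
    by (rule powr_mono2) (use assms in auto)
  also have "\<dots> = 2 powr p * max x y powr p" by (simp add: powr_mult)
  also have "\<dots> \<le> 2 powr p * (x powr p + y powr p)"
    by (rule mult_left_mono) (simp_all add: max_def)
  finally show ?thesis .
qed

lemma norm_lincomb_powr_le:
  fixes u v :: "'b::real_normed_vector"
  assumes "0 < p"
  shows "norm (a *\<^sub>R u + b *\<^sub>R v) powr p
     \<le> 2 powr p * (\<bar>a\<bar> powr p * norm u powr p + \<bar>b\<bar> powr p * norm v powr p)"
proof -
  have "norm (a *\<^sub>R u + b *\<^sub>R v) powr p \<le> (\<bar>a\<bar> * norm u + \<bar>b\<bar> * norm v) powr p"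
    by (rule powr_mono2) (use assms norm_triangle_ineq[of "a *\<^sub>R u" "b *\<^sub>R v"] in auto)
  also have "\<dots> \<le> 2 powr p * ((\<bar>a\<bar> * norm u) powr p + (\<bar>b\<bar> * norm v) powr p)"
    by (rule powr_add_le) (use assms in auto)
  finally show ?thesis by (simp add: powr_mult)
qed

lemma le_add_powr:
  fixes y e p :: real
  assumes "0 \<le> y" "0 < e" "1 \<le> p"
  shows "y \<le> e + e powr (1 - p) * y powr p"
proof (cases "y \<le> e")
  case True then show ?thesis using assms by (simp add: add_increasing2)
next
  case False
  have "e powr (1 - p) * y powr p = y * (y / e) powr (p - 1)"
    using False assms by (simp add: powr_diff powr_divide field_simps powr_add[symmetric])
  also have "\<dots> \<ge> y * 1"
    using False assms by (intro mult_left_mono ge_one_powr_ge_zero) auto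
  finally show ?thesis using assms by simp
qed

lemma Lp_lincomb:
  fixes f g :: "'b \<Rightarrow> 'c::{banach, second_countable_topology}"
  assumes "Lp M p f" "Lp M p g" "0 < p"
  shows "Lp M p (\<lambda>x. a *\<^sub>R f x + b *\<^sub>R g x)"
  unfolding Lp_def
proof
  have [measurable]: "f \<in> borel_measurable M" "g \<in> borel_measurable M"
    using assms(1,2) unfolding Lp_def by auto
  show "(\<lambda>x. a *\<^sub>R f x + b *\<^sub>R g x) \<in> borel_measurable M" by measurable
  show "integrable M (\<lambda>x. norm (a *\<^sub>R f x + b *\<^sub>R g x) powr p)"
  proof (rule Bochner_Integration.integrable_bound)
    show "integrable M (\<lambda>x. 2 powr p * (\<bar>a\<bar> powr p * norm (f x) powr p + \<bar>b\<bar> powr p * norm (g x) powr p))"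
      using assms(1,2) unfolding Lp_def by (intro integrable_mult_right Bochner_Integration.integrable_add) auto
    show "(\<lambda>x. norm (a *\<^sub>R f x + b *\<^sub>R g x) powr p) \<in> borel_measurable M" by measurable
    show "AE x in M. norm (norm (a *\<^sub>R f x + b *\<^sub>R g x) powr p)
        \<le> norm (2 powr p * (\<bar>a\<bar> powr p * norm (f x) powr p + \<bar>b\<bar> powr p * norm (g x) powr p))"
      using norm_lincomb_powr_le[OF assms(3)] by (intro always_eventually allI) simp
  qed
qed

lemma Lp_diff:
  fixes f g :: "'b \<Rightarrow> 'c::{banach, second_countable_topology}"
  assumes "Lp M p f" "Lp M p g" "0 < p"
  shows "Lp M p (\<lambda>x. f x - g x)"
  using Lp_lincomb[OF assms, of 1 "-1"] by simp

lemma Lp_dominated: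
  fixes f :: "'b \<Rightarrow> 'c::real_normed_vector" and g :: "'b \<Rightarrow> 'd::real_normed_vector"
  assumes "f \<in> borel_measurable M" "Lp M p g" "0 < p" "\<And>x. norm (f x) \<le> c * norm (g x)" "0 \<le> c"
  shows "Lp M p f"
  unfolding Lp_def
proof
  show "f \<in> borel_measurable M" by fact
  show "integrable M (\<lambda>x. norm (f x) powr p)"
  proof (rule Bochner_Integration.integrable_bound)
    show "integrable M (\<lambda>x. c powr p * norm (g x) powr p)" using assms(2) unfolding Lp_def by auto
    have [measurable]: "f \<in> borel_measurable M" by fact
    show "(\<lambda>x. norm (f x) powr p) \<in> borel_measurable M" by measurable
    have "norm (f x) powr p \<le> c powr p * norm (g x) powr p" for x
      using powr_mono2[OF _ _ assms(4)[of x]] assms(3,5) by (simp add: powr_mult)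
    then show "AE x in M. norm (norm (f x) powr p) \<le> norm (c powr p * norm (g x) powr p)"
      by (intro always_eventually allI) simp
  qed
qed

lemma Lp_bounded:
  fixes f :: "'b \<Rightarrow> 'c::real_normed_vector"
  assumes "finite_measure M" "f \<in> borel_measurable M" "\<And>x. norm (f x) \<le> B" "0 \<le> p"
  shows "Lp M p f"
  unfolding Lp_def
proof
  show "f \<in> borel_measurable M" by fact
  have [measurable]: "f \<in> borel_measurable M" by fact
  have "AE x in M. norm (norm (f x) powr p) \<le> B powr p"
    using assms(3,4) by (intro always_eventually allI) (simp add: powr_mono2)
  then show "integrable M (\<lambda>x. norm (f x) powr p)"
    by (rule finite_measure.integrable_const_bound[OF assms(1)]) measurable
qed

lemma integrable_Lp:
  fixes f :: "'b \<Rightarrow> 'c::{banach, second_countable_topology}"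
  assumes "finite_measure M" "1 \<le> p" "Lp M p f"
  shows "integrable M f"
proof (rule Bochner_Integration.integrable_bound)
  show "integrable M (\<lambda>x. 1 + norm (f x) powr p)"
    using assms finite_measure.integrable_const unfolding Lp_def
    by (intro Bochner_Integration.integrable_add) blast+
  show "f \<in> borel_measurable M" using assms(3) unfolding Lp_def by simp
  have "norm (f x) \<le> 1 + norm (f x) powr p" for x
    using le_add_powr[of "norm (f x)" 1 p] assms(2) by simp
  then show "AE x in M. norm (f x) \<le> norm (1 + norm (f x) powr p)"
    by (intro always_eventually allI) simp
qed

lemma integrable_Lp_mult_bounded:
  fixes f :: "'b \<Rightarrow> real"
  assumes "finite_measure M" "1 \<le> p" "Lp M p f" "b \<in> borel_measurable M" "\<And>x. \<bar>b x\<bar> \<le> B"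
  shows "integrable M (\<lambda>x. f x * b x)"
proof (rule Bochner_Integration.integrable_bound)
  show "integrable M (\<lambda>x. B * f x)" using integrable_Lp[OF assms(1-3)] by simp
  have [measurable]: "f \<in> borel_measurable M" "b \<in> borel_measurable M"
    using assms(3,4) by (auto simp: Lp_def)
  show "(\<lambda>x. f x * b x) \<in> borel_measurable M" by measurable
  have "\<bar>b x\<bar> * \<bar>f x\<bar> \<le> \<bar>B\<bar> * \<bar>f x\<bar>" for x
    using assms(5)[of x] by (intro mult_right_mono) auto
  then show "AE x in M. norm (f x * b x) \<le> norm (B * f x)"
    by (intro always_eventually allI) (simp add: abs_mult mult.commute)
qed

lemma Lp_inner_Basis:
  fixes F :: "'b \<Rightarrow> 'a::euclidean_space"
  assumes "Lp M p F" "i \<in> Basis" "0 < p"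
  shows "Lp M p (\<lambda>x. F x \<bullet> i)"
proof (rule Lp_dominated[OF _ assms(1,3), of _ 1])
  have [measurable]: "F \<in> borel_measurable M" using assms(1) unfolding Lp_def by simp
  show "(\<lambda>x. F x \<bullet> i) \<in> borel_measurable M" by measurable
  show "norm (F x \<bullet> i) \<le> 1 * norm (F x)" for x using Basis_le_norm[OF assms(2)] by simp
qed simp

definition Lp_tendsto :: "'b measure \<Rightarrow> real \<Rightarrow> (nat \<Rightarrow> 'b \<Rightarrow> 'c::real_normed_vector) \<Rightarrow> ('b \<Rightarrow> 'c) \<Rightarrow> bool"
  where "Lp_tendsto M p f g \<longleftrightarrow>
    (\<forall>k. Lp M p (\<lambda>x. f k x - g x)) \<and> (\<lambda>k. \<integral>x. norm (f k x - g x) powr p \<partial>M) \<longlonglongrightarrow> 0"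

lemma Lp_tendsto_cong:
  assumes "\<And>k x. f k x = f' k x"
  shows "Lp_tendsto M p f g = Lp_tendsto M p f' g"
proof -
  have "f = f'" using assms by (intro ext)
  then show ?thesis by simp
qed

lemma Lp_tendsto_compare:
  fixes f :: "nat \<Rightarrow> 'b \<Rightarrow> 'c::real_normed_vector" and g :: "nat \<Rightarrow> 'b \<Rightarrow> 'd::real_normed_vector"
  assumes g: "Lp_tendsto M p g g0" and p: "0 < p" and c: "0 \<le> c"
    and f: "\<And>k. (\<lambda>x. f k x - f0 x) \<in> borel_measurable M"
    and le: "\<And>k x. norm (f k x - f0 x) \<le> c * norm (g k x - g0 x)"
  shows "Lp_tendsto M p f f0"
proof -
  have L: "Lp M p (\<lambda>x. f k x - f0 x)" for k
    using Lp_dominated[OF f _ p le c] g unfolding Lp_tendsto_def by blast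
  have le_p: "norm (f k x - f0 x) powr p \<le> c powr p * norm (g k x - g0 x) powr p" for k x
    using powr_mono2[OF _ _ le] p c by (simp add: powr_mult)
  have "(\<lambda>k. \<integral>x. norm (f k x - f0 x) powr p \<partial>M) \<longlonglongrightarrow> 0"
  proof (rule real_tendsto_sandwich[OF _ _ tendsto_const])
    show "(\<lambda>k. c powr p * (\<integral>x. norm (g k x - g0 x) powr p \<partial>M)) \<longlonglongrightarrow> 0"
      using tendsto_mult_right_zero g unfolding Lp_tendsto_def by blast
    show "\<forall>\<^sub>F k in sequentially. 0 \<le> (\<integral>x. norm (f k x - f0 x) powr p \<partial>M)" by simp
    show "\<forall>\<^sub>F k in sequentially. (\<integral>x. norm (f k x - f0 x) powr p \<partial>M)
        \<le> c powr p * (\<integral>x. norm (g k x - g0 x) powr p \<partial>M)"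
    proof (intro always_eventually allI)
      fix k
      have "(\<integral>x. norm (f k x - f0 x) powr p \<partial>M) \<le> (\<integral>x. c powr p * norm (g k x - g0 x) powr p \<partial>M)"
        using L g le_p unfolding Lp_tendsto_def Lp_def by (intro integral_mono) auto
      then show "(\<integral>x. norm (f k x - f0 x) powr p \<partial>M) \<le> c powr p * (\<integral>x. norm (g k x - g0 x) powr p \<partial>M)"
        by simp
    qed
  qed
  with L show ?thesis unfolding Lp_tendsto_def by blast
qed

lemma Lp_tendsto_lincomb:
  fixes f g :: "nat \<Rightarrow> 'b \<Rightarrow> 'c::{banach, second_countable_topology}"
  assumes f: "Lp_tendsto M p f f0" and g: "Lp_tendsto M p g g0" and p: "0 < p"
  shows "Lp_tendsto M p (\<lambda>k x. a *\<^sub>R f k x + b *\<^sub>R g k x) (\<lambda>x. a *\<^sub>R f0 x + b *\<^sub>R g0 x)"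
proof -
  let ?F = "\<lambda>k x. f k x - f0 x" and ?G = "\<lambda>k x. g k x - g0 x"
  have eq: "a *\<^sub>R f k x + b *\<^sub>R g k x - (a *\<^sub>R f0 x + b *\<^sub>R g0 x) = a *\<^sub>R ?F k x + b *\<^sub>R ?G k x" for k x
    by (simp add: algebra_simps)
  have LF: "Lp M p (?F k)" and LG: "Lp M p (?G k)" for k
    using f g unfolding Lp_tendsto_def by auto
  have "(\<lambda>k. \<integral>x. norm (a *\<^sub>R ?F k x + b *\<^sub>R ?G k x) powr p \<partial>M) \<longlonglongrightarrow> 0"
  proof (rule real_tendsto_sandwich[OF _ _ tendsto_const])
    let ?bound = "\<lambda>k. 2 powr p * (\<bar>a\<bar> powr p * (\<integral>x. norm (?F k x) powr p \<partial>M)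
        + \<bar>b\<bar> powr p * (\<integral>x. norm (?G k x) powr p \<partial>M))"
    have "?bound \<longlonglongrightarrow> 2 powr p * (\<bar>a\<bar> powr p * 0 + \<bar>b\<bar> powr p * 0)"
      using f g unfolding Lp_tendsto_def by (intro tendsto_intros) auto
    then show "?bound \<longlonglongrightarrow> 0" by simp
    show "\<forall>\<^sub>F k in sequentially. 0 \<le> (\<integral>x. norm (a *\<^sub>R ?F k x + b *\<^sub>R ?G k x) powr p \<partial>M)" by simp
    show "\<forall>\<^sub>F k in sequentially. (\<integral>x. norm (a *\<^sub>R ?F k x + b *\<^sub>R ?G k x) powr p \<partial>M) \<le> ?bound k"
    proof (intro always_eventually allI)
      fix k
      have iF: "integrable M (\<lambda>x. norm (?F k x) powr p)" and iG: "integrable M (\<lambda>x. norm (?G k x) powr p)"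
        using LF LG unfolding Lp_def by auto
      have "(\<integral>x. norm (a *\<^sub>R ?F k x + b *\<^sub>R ?G k x) powr p \<partial>M)
          \<le> (\<integral>x. 2 powr p * (\<bar>a\<bar> powr p * norm (?F k x) powr p + \<bar>b\<bar> powr p * norm (?G k x) powr p) \<partial>M)"
        using Lp_lincomb[OF LF LG p] iF iG norm_lincomb_powr_le[OF p] unfolding Lp_def
        by (intro integral_mono) auto
      also have "\<dots> = ?bound k" using iF iG by simp
      finally show "(\<integral>x. norm (a *\<^sub>R ?F k x + b *\<^sub>R ?G k x) powr p \<partial>M) \<le> ?bound k" .
    qed
  qed
  then show ?thesis using Lp_lincomb[OF LF LG p] unfolding Lp_tendsto_def eq by blast
qed

lemma Lp_tendsto_dominated:
  fixes f :: "nat \<Rightarrow> 'b \<Rightarrow> 'c::{banach, second_countable_topology}"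
  assumes f: "\<And>k. (\<lambda>x. f k x - f0 x) \<in> borel_measurable M"
    and w: "Lp M p w" and le: "\<And>k x. norm (f k x - f0 x) \<le> w x"
    and lim: "AE x in M. (\<lambda>k. f k x) \<longlonglongrightarrow> f0 x" and p: "0 < p"
  shows "Lp_tendsto M p f f0"
proof -
  have L: "Lp M p (\<lambda>x. f k x - f0 x)" for k
    by (rule Lp_dominated[OF f w p, of _ 1]) (use le in \<open>auto intro: order_trans[OF _ abs_ge_self]\<close>)
  have "(\<lambda>k. \<integral>x. norm (f k x - f0 x) powr p \<partial>M) \<longlonglongrightarrow> (\<integral>x. 0 \<partial>M)"
  proof (rule integral_dominated_convergence[where w = "\<lambda>x. norm (w x) powr p"])
    show "(\<lambda>x. norm (f k x - f0 x) powr p) \<in> borel_measurable M" for k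
      using L unfolding Lp_def by (simp add: borel_measurable_integrable)
    show "integrable M (\<lambda>x. norm (w x) powr p)" using w unfolding Lp_def by simp
    show "AE x in M. (\<lambda>k. norm (f k x - f0 x) powr p) \<longlonglongrightarrow> 0"
      using lim
    proof eventually_elim
      case (elim x)
      then have "(\<lambda>k. norm (f k x - f0 x)) \<longlonglongrightarrow> 0" by (simp add: LIM_zero_iff tendsto_norm_zero)
      then show ?case by (rule tendsto_zero_powrI[OF _ tendsto_const]) (use p in auto)
    qed
    have "norm (f k x - f0 x) powr p \<le> \<bar>w x\<bar> powr p" for k x
      using le[of k x] p by (intro powr_mono2) (auto intro: order_trans[OF _ abs_ge_self])
    then show "AE x in M. norm (norm (f k x - f0 x) powr p) \<le> norm (w x) powr p" for k
      by simp
  qed simp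
  with L show ?thesis unfolding Lp_tendsto_def by simp
qed

lemma Lp_tendsto_subseq:
  "Lp_tendsto M p f g \<Longrightarrow> strict_mono r \<Longrightarrow> Lp_tendsto M p (\<lambda>k. f (r k)) g"
  unfolding Lp_tendsto_def using LIMSEQ_subseq_LIMSEQ by (auto simp: o_def)

lemma Lp_tendsto_AE_subseq:
  assumes "Lp_tendsto M p f g" "0 < p"
  obtains r where "strict_mono r" "AE x in M. (\<lambda>k. f (r k) x) \<longlonglongrightarrow> g x"
proof -
  obtain r where r: "strict_mono r" and ae: "AE x in M. (\<lambda>k. norm (f (r k) x - g x) powr p) \<longlonglongrightarrow> 0"
    using tendsto_L1_AE_subseq[of M "\<lambda>k x. norm (f k x - g x) powr p"] assms
    unfolding Lp_tendsto_def Lp_def by auto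
  have "AE x in M. (\<lambda>k. f (r k) x) \<longlonglongrightarrow> g x"
    using ae
  proof eventually_elim
    case (elim x)
    have "(\<lambda>k. (norm (f (r k) x - g x) powr p) powr (1 / p)) \<longlonglongrightarrow> 0"
      by (rule tendsto_zero_powrI[OF elim tendsto_const]) (use assms(2) in auto)
    then show ?case
      using assms(2) by (simp add: powr_powr tendsto_norm_zero_iff LIM_zero_iff)
  qed
  with r that show ?thesis by blast
qed

lemma Lp_tendsto_L1:
  fixes f :: "nat \<Rightarrow> 'b \<Rightarrow> 'c::{banach, second_countable_topology}"
  assumes M: "finite_measure M" and p: "1 \<le> p" and f: "Lp_tendsto M p f g"
  shows "(\<lambda>k. \<integral>x. norm (f k x - g x) \<partial>M) \<longlonglongrightarrow> 0"
proof (rule LIMSEQ_I)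
  fix r :: real assume r: "0 < r"
  define \<mu> where "\<mu> = measure M (space M)"
  define e where "e = r / (2 * (\<mu> + 1))"
  have "0 \<le> \<mu>" unfolding \<mu>_def by simp
  then have e: "0 < e" "e * \<mu> < r / 2"
    using r unfolding e_def by (simp_all add: field_simps)
  have L: "Lp M p (\<lambda>x. f k x - g x)" for k using f unfolding Lp_tendsto_def by blast
  have lim: "(\<lambda>k. \<integral>x. norm (f k x - g x) powr p \<partial>M) \<longlonglongrightarrow> 0"
    using f unfolding Lp_tendsto_def by blast
  have "0 < r / 2 / e powr (1 - p)" using r e by simp
  from LIMSEQ_D[OF lim this] obtain N
    where N: "\<And>k. N \<le> k \<Longrightarrow> norm ((\<integral>x. norm (f k x - g x) powr p \<partial>M) - 0) < r / 2 / e powr (1 - p)"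
    by blast
  show "\<exists>N. \<forall>k\<ge>N. norm ((\<integral>x. norm (f k x - g x) \<partial>M) - 0) < r"
  proof (intro exI allI impI)
    fix k assume k: "N \<le> k"
    have i: "integrable M (\<lambda>x. norm (f k x - g x) powr p)" using L unfolding Lp_def by blast
    have "(\<integral>x. norm (f k x - g x) \<partial>M) \<le> (\<integral>x. e + e powr (1 - p) * norm (f k x - g x) powr p \<partial>M)"
      using integrable_Lp[OF M p L] i finite_measure.integrable_const[OF M] le_add_powr e(1) p
      by (intro integral_mono Bochner_Integration.integrable_add integrable_mult_right) auto
    also have "\<dots> = e * \<mu> + e powr (1 - p) * (\<integral>x. norm (f k x - g x) powr p \<partial>M)"
      using i finite_measure.integrable_const[OF M]
      by (subst Bochner_Integration.integral_add) (auto simp: \<mu>_def mult.commute)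
    also have "\<dots> < r"
      using e N[OF k] by (simp add: field_simps)
    finally show "norm ((\<integral>x. norm (f k x - g x) \<partial>M) - 0) < r" by simp
  qed
qed

lemma Lp_tendsto_integral_mult:
  fixes f :: "nat \<Rightarrow> 'b \<Rightarrow> real"
  assumes M: "finite_measure M" and p: "1 \<le> p" and f: "Lp_tendsto M p f g" and g: "Lp M p g"
    and b: "b \<in> borel_measurable M" "\<And>x. \<bar>b x\<bar> \<le> B"
  shows "(\<lambda>k. \<integral>x. f k x * b x \<partial>M) \<longlonglongrightarrow> (\<integral>x. g x * b x \<partial>M)"
proof -
  have L: "Lp M p (\<lambda>x. f k x - g x)" for k using f unfolding Lp_tendsto_def by blast
  have split: "(\<integral>x. f k x * b x \<partial>M) = (\<integral>x. (f k x - g x) * b x \<partial>M) + (\<integral>x. g x * b x \<partial>M)" for k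
    using integrable_Lp_mult_bounded[OF M p L b] integrable_Lp_mult_bounded[OF M p g b]
    by (simp flip: Bochner_Integration.integral_add add: algebra_simps)
  have "(\<lambda>k. \<integral>x. (f k x - g x) * b x \<partial>M) \<longlonglongrightarrow> 0"
  proof (rule Lim_null_comparison)
    show "(\<lambda>k. B * (\<integral>x. norm (f k x - g x) \<partial>M)) \<longlonglongrightarrow> 0"
      using tendsto_mult_right_zero[OF Lp_tendsto_L1[OF M p f]] .
    have "norm (\<integral>x. (f k x - g x) * b x \<partial>M) \<le> B * (\<integral>x. norm (f k x - g x) \<partial>M)" for k
    proof -
      have "norm (\<integral>x. (f k x - g x) * b x \<partial>M) \<le> (\<integral>x. norm ((f k x - g x) * b x) \<partial>M)"
        by (rule integral_norm_bound)
      also have "\<dots> \<le> (\<integral>x. B * norm (f k x - g x) \<partial>M)"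
      proof (rule integral_mono)
        show "norm ((f k x - g x) * b x) \<le> B * norm (f k x - g x)" for x
          using b(2)[of x] by (simp add: abs_mult mult.commute mult_right_mono)
      qed (use integrable_norm[OF integrable_Lp_mult_bounded[OF M p L b]] integrable_Lp[OF M p L] in auto)
      finally show ?thesis by simp
    qed
    then show "\<forall>\<^sub>F k in sequentially. norm (\<integral>x. (f k x - g x) * b x \<partial>M) \<le> B * (\<integral>x. norm (f k x - g x) \<partial>M)"
      by simp
  qed
  from tendsto_add[OF this tendsto_const] show ?thesis unfolding split by simp
qed

lemma Lp_tendsto_inner_Basis:
  fixes f :: "nat \<Rightarrow> 'b \<Rightarrow> 'a::euclidean_space"
  assumes "Lp_tendsto M p f g" "i \<in> Basis" "0 < p"
  shows "Lp_tendsto M p (\<lambda>k x. f k x \<bullet> i) (\<lambda>x. g x \<bullet> i)"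
proof (rule Lp_tendsto_compare[OF assms(1,3), of 1])
  fix k
  have [measurable]: "(\<lambda>x. f k x - g x) \<in> borel_measurable M"
    using assms(1) unfolding Lp_tendsto_def Lp_def by blast
  have "(\<lambda>x. (f k x - g x) \<bullet> i) \<in> borel_measurable M" by measurable
  then show "(\<lambda>x. f k x \<bullet> i - g x \<bullet> i) \<in> borel_measurable M" by (simp add: inner_diff_left)
  show "norm (f k x \<bullet> i - g x \<bullet> i) \<le> 1 * norm (f k x - g x)" for x
    using Basis_le_norm[OF assms(2), of "f k x - g x"] by (simp add: inner_diff_left)
qed simp

lemma Lp_tendsto_scaleR_bounded:
  fixes G :: "nat \<Rightarrow> 'b \<Rightarrow> 'c::{banach, second_countable_topology}"
  assumes G: "Lp_tendsto M p G H" "Lp M p H" and p: "0 < p"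
    and a: "\<And>k. a k \<in> borel_measurable M" "a0 \<in> borel_measurable M"
      "\<And>k x. \<bar>a k x\<bar> \<le> c" "\<And>x. \<bar>a0 x\<bar> \<le> c"
    and a_lim: "AE x in M. (\<lambda>k. a k x) \<longlonglongrightarrow> a0 x"
  shows "Lp_tendsto M p (\<lambda>k x. a k x *\<^sub>R G k x) (\<lambda>x. a0 x *\<^sub>R H x)"
proof -
  have c: "0 \<le> c" using a(3)[of 0 undefined] by simp
  have [measurable]: "(\<lambda>x. G k x - H x) \<in> borel_measurable M" "H \<in> borel_measurable M"
    "a k \<in> borel_measurable M" "a0 \<in> borel_measurable M" for k
    using G a unfolding Lp_tendsto_def Lp_def by auto
  have "Lp_tendsto M p (\<lambda>k x. a k x *\<^sub>R (G k x - H x)) (\<lambda>x. 0)"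
  proof (rule Lp_tendsto_compare[OF G(1) p c])
    show "(\<lambda>x. a k x *\<^sub>R (G k x - H x) - 0) \<in> borel_measurable M" for k by measurable
    show "norm (a k x *\<^sub>R (G k x - H x) - 0) \<le> c * norm (G k x - H x)" for k x
      using a(3)[of k x] by (simp add: mult_right_mono)
  qed
  moreover have "Lp_tendsto M p (\<lambda>k x. a k x *\<^sub>R H x) (\<lambda>x. a0 x *\<^sub>R H x)"
  proof (rule Lp_tendsto_dominated[OF _ _ _ _ p])
    show "(\<lambda>x. a k x *\<^sub>R H x - a0 x *\<^sub>R H x) \<in> borel_measurable M" for k by measurable
    show "Lp M p (\<lambda>x. 2 * c * norm (H x))"
      using Lp_dominated[OF _ G(2) p, of "\<lambda>x. 2 * c * norm (H x)" "2 * c"] c by simp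
    show "norm (a k x *\<^sub>R H x - a0 x *\<^sub>R H x) \<le> 2 * c * norm (H x)" for k x
      using a(3)[of k x] a(4)[of x]
      by (simp add: scaleR_diff_left[symmetric] mult_right_mono del: scaleR_diff_left)
    show "AE x in M. (\<lambda>k. a k x *\<^sub>R H x) \<longlonglongrightarrow> a0 x *\<^sub>R H x"
      using a_lim by eventually_elim (intro tendsto_intros)
  qed
  ultimately have "Lp_tendsto M p (\<lambda>k x. 1 *\<^sub>R (a k x *\<^sub>R (G k x - H x)) + 1 *\<^sub>R (a k x *\<^sub>R H x))
      (\<lambda>x. 1 *\<^sub>R 0 + 1 *\<^sub>R (a0 x *\<^sub>R H x))"
    by (rule Lp_tendsto_lincomb[OF _ _ p])
  then show ?thesis by (simp add: scaleR_diff_right)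
qed

section \<open>Test functions\<close>

lemma grad_eq: "(f has_derivative f') (at x) \<Longrightarrow> grad f x = (\<Sum>i\<in>Basis. f' i *\<^sub>R i)"
  unfolding grad_def by (metis frechet_derivative_at)

lemma grad_inner_Basis: "i \<in> Basis \<Longrightarrow> grad \<phi> x \<bullet> i = frechet_derivative \<phi> (at x) i"
  unfolding grad_def by (simp add: inner_sum_left inner_Basis if_distrib cong: if_cong)

lemma grad_lincomb:
  assumes "smooth_fun f" "smooth_fun g"
  shows "grad (\<lambda>x. a * f x + b * g x) x = a *\<^sub>R grad f x + b *\<^sub>R grad g x"
proof -
  have D: "((\<lambda>x. a * f x + b * g x) has_derivative
      (\<lambda>v. a * frechet_derivative f (at x) v + b * frechet_derivative g (at x) v)) (at x)"
    by (intro derivative_intros smooth_fun_has_derivative assms)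
  show ?thesis
    unfolding grad_eq[OF D] by (simp add: grad_def scaleR_add_left sum.distrib scaleR_sum_right)
qed

lemma grad_comp:
  assumes "smooth_real g" "smooth_fun f"
  shows "grad (\<lambda>x. g (f x)) x = deriv g (f x) *\<^sub>R grad f x"
  unfolding grad_eq[OF has_derivative_smooth_real_comp[OF assms(1) smooth_fun_has_derivative[OF assms(2)]]]
  by (simp add: grad_def scaleR_sum_right)

lemma grad_continuous_on: "smooth_fun \<phi> \<Longrightarrow> continuous_on S (grad \<phi>)"
  unfolding grad_def[abs_def]
  by (intro continuous_on_sum continuous_on_scaleR continuous_on_const smooth_fun_partial_continuous_on)
    auto

lemma continuous_measurable_lebesgue_on:
  "continuous_on UNIV f \<Longrightarrow> D \<in> sets lebesgue \<Longrightarrow> f \<in> borel_measurable (lebesgue_on D)"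
  by (rule continuous_imp_measurable_on_sets_lebesgue) (auto intro: continuous_on_subset)

lemma test_funE:
  assumes "test_fun D \<phi>"
  obtains K where "smooth_fun \<phi>" "compact K" "K \<subseteq> D" "\<And>x. x \<notin> K \<Longrightarrow> \<phi> x = 0"
  using assms unfolding test_fun_def by blast

lemma test_fun_smooth: "test_fun D \<phi> \<Longrightarrow> smooth_fun \<phi>"
  unfolding test_fun_def by blast

lemma test_fun_lincomb:
  assumes "test_fun D \<phi>" "test_fun D \<psi>"
  shows "test_fun D (\<lambda>x. a * \<phi> x + b * \<psi> x)"
proof -
  obtain K1 K2 where "smooth_fun \<phi>" "compact K1" "K1 \<subseteq> D" "\<And>x. x \<notin> K1 \<Longrightarrow> \<phi> x = 0"
    and "smooth_fun \<psi>" "compact K2" "K2 \<subseteq> D" "\<And>x. x \<notin> K2 \<Longrightarrow> \<psi> x = 0"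
    using assms by (metis test_funE)
  then show ?thesis unfolding test_fun_def
    by (intro conjI smooth_fun_lincomb exI[of _ "K1 \<union> K2"]) auto
qed

lemma test_fun_comp:
  assumes "smooth_real m" "m 0 = 0" "test_fun D \<phi>"
  shows "test_fun D (\<lambda>x. m (\<phi> x))"
  using assms(3) unfolding test_fun_def
  by (auto intro: smooth_fun_comp[OF assms(1)] simp: assms(2))

lemma test_fun_bounded:
  assumes "test_fun D \<phi>"
  shows "\<exists>B. \<forall>x. \<bar>\<phi> x\<bar> \<le> B" "\<exists>B. \<forall>x. norm (grad \<phi> x) \<le> B"
    "i \<in> Basis \<Longrightarrow> \<exists>B. \<forall>x. \<bar>frechet_derivative \<phi> (at x) i\<bar> \<le> B"
proof -
  obtain K where K: "smooth_fun \<phi>" "compact K" "\<And>x. x \<notin> K \<Longrightarrow> \<phi> x = 0"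
    using assms by (metis test_funE)
  have dK: "\<And>x. x \<notin> K \<Longrightarrow> frechet_derivative \<phi> (at x) = (\<lambda>_. 0)"
    by (rule frechet_derivative_outside_support[OF compact_imp_closed[OF K(2)] K(3)])
  show "\<exists>B. \<forall>x. \<bar>\<phi> x\<bar> \<le> B"
    using compact_support_bounded[OF smooth_fun_continuous_on[OF K(1)] K(2,3)] by simp
  show "\<exists>B. \<forall>x. norm (grad \<phi> x) \<le> B"
    using compact_support_bounded[OF grad_continuous_on[OF K(1)] K(2)] dK by (simp add: grad_def)
  show "i \<in> Basis \<Longrightarrow> \<exists>B. \<forall>x. \<bar>frechet_derivative \<phi> (at x) i\<bar> \<le> B"
    using compact_support_bounded[OF smooth_fun_partial_continuous_on[OF K(1)] K(2)] dK by simp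
qed

lemma test_fun_measurable:
  assumes "test_fun D \<phi>" "D \<in> sets lebesgue"
  shows "\<phi> \<in> borel_measurable (lebesgue_on D)" "grad \<phi> \<in> borel_measurable (lebesgue_on D)"
    "i \<in> Basis \<Longrightarrow> (\<lambda>x. frechet_derivative \<phi> (at x) i) \<in> borel_measurable (lebesgue_on D)"
  using test_fun_smooth[OF assms(1)] continuous_measurable_lebesgue_on[OF _ assms(2)]
    smooth_fun_continuous_on grad_continuous_on smooth_fun_partial_continuous_on
  by blast+

lemma test_fun_Lp:
  assumes "test_fun D \<phi>" "open D" "bounded D" "0 \<le> p"
  shows "Lp (lebesgue_on D) p \<phi>" "Lp (lebesgue_on D) p (grad \<phi>)"
proof -
  have D: "D \<in> sets lebesgue" "finite_measure (lebesgue_on D)"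
    using lmeasurable_open[OF assms(3,2)] by (auto intro: finite_measure_lebesgue_on)
  obtain B1 B2 where "\<And>x. norm (\<phi> x) \<le> B1" "\<And>x. norm (grad \<phi> x) \<le> B2"
    using test_fun_bounded(1,2)[OF assms(1)] by auto
  then show "Lp (lebesgue_on D) p \<phi>" "Lp (lebesgue_on D) p (grad \<phi>)"
    using test_fun_measurable[OF assms(1) D(1)] Lp_bounded[OF D(2)] assms(4) by blast+
qed

lemma integral_lebesgue_on_eq_lborel:
  fixes g :: "'a::euclidean_space \<Rightarrow> real"
  assumes "D \<in> sets lebesgue" "g \<in> borel_measurable borel" "\<And>x. x \<notin> D \<Longrightarrow> g x = 0"
  shows "integral\<^sup>L (lebesgue_on D) g = integral\<^sup>L lborel g"
proof -
  have "integral\<^sup>L (lebesgue_on D) g = integral\<^sup>L lebesgue (\<lambda>x. indicator D x *\<^sub>R g x)"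
    by (rule integral_restrict_space) (use assms(1) in simp)
  also have "(\<lambda>x. indicator D x *\<^sub>R g x) = g" using assms(3) by (auto simp: fun_eq_iff indicator_def)
  also have "integral\<^sup>L lebesgue g = integral\<^sup>L lborel g"
    by (rule integral_completion) (use assms(2) in simp)
  finally show ?thesis .
qed

lemma integral_by_parts_test_fun:
  assumes D: "D \<in> sets lebesgue" and w: "smooth_fun w" and \<psi>: "test_fun D \<psi>" and i: "i \<in> Basis"
  shows "(\<integral>x. w x * frechet_derivative \<psi> (at x) i \<partial>lebesgue_on D)
       = - (\<integral>x. frechet_derivative w (at x) i * \<psi> x \<partial>lebesgue_on D)"
proof -
  obtain K where K: "smooth_fun \<psi>" "compact K" "K \<subseteq> D" "\<And>x. x \<notin> K \<Longrightarrow> \<psi> x = 0"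
    using \<psi> by (metis test_funE)
  define a where "a x = w x * frechet_derivative \<psi> (at x) i" for x
  define b where "b x = frechet_derivative w (at x) i * \<psi> x" for x
  have ca: "continuous_on UNIV a" and cb: "continuous_on UNIV b" unfolding a_def[abs_def] b_def[abs_def]
    by (intro continuous_intros smooth_fun_continuous_on smooth_fun_partial_continuous_on w K(1) i)+
  have za: "x \<notin> K \<Longrightarrow> a x = 0" and zb: "x \<notin> K \<Longrightarrow> b x = 0" for x
    unfolding a_def b_def using frechet_derivative_outside_support[OF compact_imp_closed[OF K(2)] K(4)] K(4)
    by auto
  have ia: "integrable lborel a" and ib: "integrable lborel b"
    using integrable_compact_support ca cb K(2) za zb by blast+
  have "(\<lambda>x. frechet_derivative (\<lambda>x. w x * \<psi> x) (at x) i) = (\<lambda>x. a x + b x)"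
    unfolding a_def b_def
    by (subst frechet_derivative_partial_eq[OF has_derivative_mult[OF smooth_fun_has_derivative
        smooth_fun_has_derivative, OF w K(1)]]) simp
  then have "integral\<^sup>L lborel a + integral\<^sup>L lborel b = 0"
    using integral_partial_compact_support[OF smooth_fun_mult[OF w K(1)] K(2) _ i] K(4) ia ib by simp
  moreover have "integral\<^sup>L (lebesgue_on D) a = integral\<^sup>L lborel a"
    "integral\<^sup>L (lebesgue_on D) b = integral\<^sup>L lborel b"
    using ca cb za zb K(3) by (auto intro!: integral_lebesgue_on_eq_lborel[OF D] borel_measurable_continuous_onI)
  ultimately show ?thesis unfolding a_def b_def by simp
qed

section \<open>The Sobolev space $W_0^{1,p}$\<close>

lemma W0_iff_Lp_tendsto:
  assumes "open D" "bounded D" "0 < p"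
  shows "W0 D p f g \<longleftrightarrow> Lp (lebesgue_on D) p f \<and> Lp (lebesgue_on D) p g \<and> weak_grad D f g \<and>
    (\<exists>\<phi>. (\<forall>k. test_fun D (\<phi> k)) \<and> Lp_tendsto (lebesgue_on D) p \<phi> f \<and>
      Lp_tendsto (lebesgue_on D) p (\<lambda>k. grad (\<phi> k)) g)"
proof -
  let ?M = "lebesgue_on D"
  have L: "Lp ?M p (\<lambda>x. \<psi> x - f x)" "Lp ?M p (\<lambda>x. grad \<psi> x - g x)"
    if "test_fun D \<psi>" "Lp ?M p f" "Lp ?M p g" for \<psi>
    using Lp_diff[OF test_fun_Lp(1)[OF that(1) assms(1,2)] that(2) assms(3)]
      Lp_diff[OF test_fun_Lp(2)[OF that(1) assms(1,2)] that(3) assms(3)] assms(3) by simp_all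
  have sum: "(\<lambda>k. X k + Y k) \<longlonglongrightarrow> 0 \<longleftrightarrow> X \<longlonglongrightarrow> 0 \<and> Y \<longlonglongrightarrow> 0"
    if "\<And>k. 0 \<le> X k" "\<And>k. 0 \<le> Y k" for X Y :: "nat \<Rightarrow> real"
  proof
    assume XY: "(\<lambda>k. X k + Y k) \<longlonglongrightarrow> 0"
    show "X \<longlonglongrightarrow> 0 \<and> Y \<longlonglongrightarrow> 0"
      by (intro conjI real_tendsto_sandwich[OF _ _ tendsto_const XY]) (simp_all add: that)
  qed (use tendsto_add[of X 0 _ Y 0] in simp)
  show ?thesis
  proof
    assume "W0 D p f g"
    then obtain \<phi> where \<phi>: "Lp ?M p f" "Lp ?M p g" "weak_grad D f g" "\<And>k. test_fun D (\<phi> k)"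
      "(\<lambda>k. (\<integral>x. \<bar>\<phi> k x - f x\<bar> powr p \<partial>?M) + (\<integral>x. norm (grad (\<phi> k) x - g x) powr p \<partial>?M)) \<longlonglongrightarrow> 0"
      unfolding W0_def by blast
    then have "Lp_tendsto ?M p \<phi> f \<and> Lp_tendsto ?M p (\<lambda>k. grad (\<phi> k)) g"
      unfolding Lp_tendsto_def using L[OF \<phi>(4,1,2)] by (simp add: sum)
    with \<phi> show "Lp ?M p f \<and> Lp ?M p g \<and> weak_grad D f g \<and>
      (\<exists>\<phi>. (\<forall>k. test_fun D (\<phi> k)) \<and> Lp_tendsto ?M p \<phi> f \<and> Lp_tendsto ?M p (\<lambda>k. grad (\<phi> k)) g)"
      by blast
  qed (auto simp: W0_def Lp_tendsto_def sum)
qed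

lemma weak_grad_limit:
  fixes D :: "'a::euclidean_space set"
  assumes D: "open D" "bounded D" and p: "1 \<le> p" and g: "Lp (lebesgue_on D) p g"
    and f: "Lp (lebesgue_on D) p f" and \<phi>: "\<And>k. test_fun D (\<phi> k)"
    and \<phi>f: "Lp_tendsto (lebesgue_on D) p \<phi> f" and \<phi>g: "Lp_tendsto (lebesgue_on D) p (\<lambda>k. grad (\<phi> k)) g"
  shows "weak_grad D f g"
  unfolding weak_grad_def
proof (intro allI impI ballI)
  fix \<theta> :: "'a \<Rightarrow> real" and i :: 'a assume \<theta>: "test_fun D \<theta>" and i: "i \<in> Basis"
  let ?M = "lebesgue_on D" and ?\<theta>' = "\<lambda>x. frechet_derivative \<theta> (at x) i"
  have M: "D \<in> sets lebesgue" "finite_measure ?M"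
    using lmeasurable_open[OF D(2,1)] by (auto intro: finite_measure_lebesgue_on)
  obtain B1 where B1: "\<And>x. \<bar>?\<theta>' x\<bar> \<le> B1" using test_fun_bounded(3)[OF \<theta> i] by blast
  obtain B2 where B2: "\<And>x. \<bar>\<theta> x\<bar> \<le> B2" using test_fun_bounded(1)[OF \<theta>] by blast
  have "(\<lambda>k. \<integral>x. \<phi> k x * ?\<theta>' x \<partial>?M) \<longlonglongrightarrow> (\<integral>x. f x * ?\<theta>' x \<partial>?M)"
    by (rule Lp_tendsto_integral_mult[OF M(2) p \<phi>f f test_fun_measurable(3)[OF \<theta> M(1) i] B1])
  moreover have "(\<lambda>k. \<integral>x. \<phi> k x * ?\<theta>' x \<partial>?M) \<longlonglongrightarrow> - (\<integral>x. (g x \<bullet> i) * \<theta> x \<partial>?M)"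
  proof -
    have "(\<lambda>k. \<integral>x. (grad (\<phi> k) x \<bullet> i) * \<theta> x \<partial>?M) \<longlonglongrightarrow> (\<integral>x. (g x \<bullet> i) * \<theta> x \<partial>?M)"
      using p by (intro Lp_tendsto_integral_mult[OF M(2) p _ _ test_fun_measurable(1)[OF \<theta> M(1)] B2]
          Lp_tendsto_inner_Basis[OF \<phi>g i] Lp_inner_Basis[OF g i]) auto
    moreover have "(\<integral>x. \<phi> k x * ?\<theta>' x \<partial>?M) = - (\<integral>x. (grad (\<phi> k) x \<bullet> i) * \<theta> x \<partial>?M)" for k
      using integral_by_parts_test_fun[OF M(1) test_fun_smooth[OF \<phi>] \<theta> i]
      by (simp add: grad_inner_Basis[OF i])
    ultimately show ?thesis by (simp add: tendsto_minus)
  qed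
  ultimately show "(\<integral>x. f x * ?\<theta>' x \<partial>?M) = - (\<integral>x. (g x \<bullet> i) * \<theta> x \<partial>?M)"
    by (rule LIMSEQ_unique)
qed

lemma W0I:
  assumes "open D" "bounded D" "1 \<le> p" "Lp (lebesgue_on D) p f" "Lp (lebesgue_on D) p g"
    "\<And>k. test_fun D (\<phi> k)" "Lp_tendsto (lebesgue_on D) p \<phi> f"
    "Lp_tendsto (lebesgue_on D) p (\<lambda>k. grad (\<phi> k)) g"
  shows "W0 D p f g"
  using assms weak_grad_limit[OF assms(1-3,5,4,6-8)] W0_iff_Lp_tendsto[of D p] by auto

lemma W0_lincomb:
  assumes D: "open D" "bounded D" and p: "1 \<le> p" and f: "W0 D p f F" and g: "W0 D p g G"
  shows "W0 D p (\<lambda>x. a * f x + b * g x) (\<lambda>x. a *\<^sub>R F x + b *\<^sub>R G x)"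
proof -
  let ?M = "lebesgue_on D"
  have p0: "0 < p" using p by simp
  obtain \<phi> where f': "Lp ?M p f" "Lp ?M p F" and \<phi>: "\<And>k. test_fun D (\<phi> k)"
    and \<phi>f: "Lp_tendsto ?M p \<phi> f" and \<phi>F: "Lp_tendsto ?M p (\<lambda>k. grad (\<phi> k)) F"
    using f W0_iff_Lp_tendsto[OF D p0] by blast
  obtain \<psi> where g': "Lp ?M p g" "Lp ?M p G" and \<psi>: "\<And>k. test_fun D (\<psi> k)"
    and \<psi>g: "Lp_tendsto ?M p \<psi> g" and \<psi>G: "Lp_tendsto ?M p (\<lambda>k. grad (\<psi> k)) G"
    using g W0_iff_Lp_tendsto[OF D p0] by blast
  show ?thesis
  proof (rule W0I[OF D p _ _ test_fun_lincomb[OF \<phi> \<psi>]])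
    show "Lp ?M p (\<lambda>x. a * f x + b * g x)" "Lp ?M p (\<lambda>x. a *\<^sub>R F x + b *\<^sub>R G x)"
      using Lp_lincomb[OF f'(1) g'(1) p0, of a b] Lp_lincomb[OF f'(2) g'(2) p0] by simp_all
    show "Lp_tendsto ?M p (\<lambda>k x. a * \<phi> k x + b * \<psi> k x) (\<lambda>x. a * f x + b * g x)"
      using Lp_tendsto_lincomb[OF \<phi>f \<psi>g p0, of a b] by simp
    show "Lp_tendsto ?M p (\<lambda>k. grad (\<lambda>x. a * \<phi> k x + b * \<psi> k x)) (\<lambda>x. a *\<^sub>R F x + b *\<^sub>R G x)"
      using Lp_tendsto_lincomb[OF \<phi>F \<psi>G p0, of a b]
      by (simp add: fun_eq_iff grad_lincomb test_fun_smooth[OF \<phi>] test_fun_smooth[OF \<psi>]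
          cong: Lp_tendsto_cong)
  qed
qed

text \<open>The approximating test functions are first thinned out to converge almost everywhere, so that
  the factors \<open>deriv m \<circ> \<phi>\<^sub>k\<close> of their gradients converge almost everywhere too.\<close>

lemma W0_comp:
  assumes D: "open D" "bounded D" and p: "1 \<le> p"
    and m: "smooth_real m" "m 0 = 0" and c: "\<And>r. \<bar>deriv m r\<bar> \<le> c"
    and h: "W0 D p h H"
  shows "W0 D p (\<lambda>x. m (h x)) (\<lambda>x. deriv m (h x) *\<^sub>R H x)"
proof -
  let ?M = "lebesgue_on D"
  have p0: "0 < p" and c0: "0 \<le> c" and DM: "D \<in> sets lebesgue"
    using p c[of 0] lmeasurable_open[OF D(2,1)] by auto
  have lip: "\<bar>m s - m t\<bar> \<le> c * \<bar>s - t\<bar>" for s t by (rule lipschitz_of_deriv_bound[OF m(1) c])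
  have cm: "continuous_on UNIV m" and cdm: "continuous_on UNIV (deriv m)"
    using smooth_real_continuous_on smooth_real_deriv m(1) by blast+
  obtain \<phi> where Lh: "Lp ?M p h" "Lp ?M p H" and \<phi>: "\<And>k. test_fun D (\<phi> k)"
    and \<phi>h: "Lp_tendsto ?M p \<phi> h" and \<phi>H: "Lp_tendsto ?M p (\<lambda>k. grad (\<phi> k)) H"
    using h W0_iff_Lp_tendsto[OF D p0] by blast
  obtain r where r: "strict_mono r" and ae: "AE x in ?M. (\<lambda>k. \<phi> (r k) x) \<longlonglongrightarrow> h x"
    using Lp_tendsto_AE_subseq[OF \<phi>h p0] by blast
  have [measurable]: "h \<in> borel_measurable ?M" "H \<in> borel_measurable ?M" "\<phi> k \<in> borel_measurable ?M" for k
    using Lh test_fun_measurable(1)[OF \<phi> DM] unfolding Lp_def by auto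
  have [measurable]: "(\<lambda>x. m (h x)) \<in> borel_measurable ?M" "(\<lambda>x. deriv m (\<phi> k x)) \<in> borel_measurable ?M"
    "(\<lambda>x. deriv m (h x)) \<in> borel_measurable ?M" "(\<lambda>x. m (\<phi> k x)) \<in> borel_measurable ?M" for k
    by (intro borel_measurable_continuous_on[OF cm] borel_measurable_continuous_on[OF cdm]; simp)+
  show ?thesis
  proof (rule W0I[OF D p _ _ test_fun_comp[OF m \<phi>]])
    show "Lp ?M p (\<lambda>x. m (h x))"
      by (rule Lp_dominated[OF _ Lh(1) p0 _ c0]) (use lip[of _ 0] m(2) in auto)
    show "Lp ?M p (\<lambda>x. deriv m (h x) *\<^sub>R H x)"
      by (rule Lp_dominated[OF _ Lh(2) p0 _ c0]) (use c in \<open>auto intro: mult_right_mono\<close>)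
    show "Lp_tendsto ?M p (\<lambda>k x. m (\<phi> (r k) x)) (\<lambda>x. m (h x))"
      by (rule Lp_tendsto_compare[OF Lp_tendsto_subseq[OF \<phi>h r] p0 c0]) (use lip in auto)
    have "Lp_tendsto ?M p (\<lambda>k x. deriv m (\<phi> (r k) x) *\<^sub>R grad (\<phi> (r k)) x) (\<lambda>x. deriv m (h x) *\<^sub>R H x)"
    proof (rule Lp_tendsto_scaleR_bounded[OF Lp_tendsto_subseq[OF \<phi>H r] Lh(2) p0])
      have dm: "isCont (deriv m) t" for t using cdm by (simp add: continuous_on_eq_continuous_at)
      show "AE x in ?M. (\<lambda>k. deriv m (\<phi> (r k) x)) \<longlonglongrightarrow> deriv m (h x)"
        using ae by eventually_elim (rule isCont_tendsto_compose[OF dm])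
    qed (use c in auto)
    then show "Lp_tendsto ?M p (\<lambda>k. grad (\<lambda>x. m (\<phi> (r k) x))) (\<lambda>x. deriv m (h x) *\<^sub>R H x)"
      by (simp add: grad_comp[OF m(1) test_fun_smooth[OF \<phi>]] cong: Lp_tendsto_cong)
  qed
qed

section \<open>The space $X = L^p(0,T;W_0^{1,p}(D))$\<close>

lemma Xrep_lincomb:
  assumes D: "open D" "bounded D" and p: "1 \<le> p" and u: "Xrep D T p u G" and v: "Xrep D T p v H"
  shows "Xrep D T p (\<lambda>z. a * u z + b * v z) (\<lambda>z. a *\<^sub>R G z + b *\<^sub>R H z)"
proof -
  have "Lp (lebesgue_on (QT T D)) p (\<lambda>z. a * u z + b * v z)"
    "Lp (lebesgue_on (QT T D)) p (\<lambda>z. a *\<^sub>R G z + b *\<^sub>R H z)"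
    using u v p Lp_lincomb[of "lebesgue_on (QT T D)" p u v a b] Lp_lincomb[of _ p G H a b]
    unfolding Xrep_def by auto
  moreover have "AE t in lebesgue_on {0<..<T}.
      W0 D p (\<lambda>x. a * u (t, x) + b * v (t, x)) (\<lambda>x. a *\<^sub>R G (t, x) + b *\<^sub>R H (t, x))"
    using u v unfolding Xrep_def by (auto elim!: AE_mp intro!: W0_lincomb[OF D p])
  ultimately show ?thesis unfolding Xrep_def by blast
qed

lemma Xrep_comp:
  assumes D: "open D" "bounded D" and p: "1 \<le> p"
    and m: "smooth_real m" "m 0 = 0" and c: "\<And>r. \<bar>deriv m r\<bar> \<le> c"
    and u: "Xrep D T p u G"
  shows "Xrep D T p (\<lambda>z. m (u z)) (\<lambda>z. deriv m (u z) *\<^sub>R G z)"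
proof -
  let ?M = "lebesgue_on (QT T D)"
  have p0: "0 < p" and c0: "0 \<le> c" using p c[of 0] by auto
  have Lu: "Lp ?M p u" "Lp ?M p G" using u unfolding Xrep_def by auto
  have [measurable]: "u \<in> borel_measurable ?M" "G \<in> borel_measurable ?M" using Lu unfolding Lp_def by auto
  have cm: "continuous_on UNIV m" and cdm: "continuous_on UNIV (deriv m)"
    using smooth_real_continuous_on smooth_real_deriv m(1) by blast+
  have [measurable]: "(\<lambda>z. m (u z)) \<in> borel_measurable ?M" "(\<lambda>z. deriv m (u z)) \<in> borel_measurable ?M"
    by (intro borel_measurable_continuous_on[OF cm] borel_measurable_continuous_on[OF cdm]; simp)+
  have "Lp ?M p (\<lambda>z. m (u z))"
    by (rule Lp_dominated[OF _ Lu(1) p0 _ c0])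
       (use lipschitz_of_deriv_bound[OF m(1) c, of _ 0] m(2) in auto)
  moreover have "Lp ?M p (\<lambda>z. deriv m (u z) *\<^sub>R G z)"
    by (rule Lp_dominated[OF _ Lu(2) p0 _ c0]) (use c in \<open>auto intro: mult_right_mono\<close>)
  moreover have "AE t in lebesgue_on {0<..<T}.
      W0 D p (\<lambda>x. m (u (t, x))) (\<lambda>x. deriv m (u (t, x)) *\<^sub>R G (t, x))"
    using u unfolding Xrep_def by (auto elim!: AE_mp intro!: W0_comp[OF D p m c])
  ultimately show ?thesis unfolding Xrep_def by blast
qed

lemma monotone_deriv_comp_diff_le:
  assumes m: "smooth_real m" "m 0 = 0" and c: "\<And>r. 0 \<le> deriv m r \<and> deriv m r \<le> c"
    and st: "0 \<le> s" "0 \<le> t"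
  shows "m (s - t) \<le> c * s"
proof -
  have "m (s - t) \<le> m s"
    using st c by (intro deriv_nonneg_imp_mono[OF smooth_real_has_deriv[OF m(1)]]) auto
  also have "m s \<le> c * s"
    using lipschitz_of_deriv_bound[OF m(1), of c s 0] c m(2) st by fastforce
  finally show ?thesis .
qed

lemma Xdual_positive_vanishing:
  assumes D: "open D" "bounded D" and p: "1 \<le> p" and \<eta>: "Xdual D T p \<eta>"
    and \<eta>_nn: "\<forall>\<phi>. Xmem D T p \<phi> \<and> (AE z in lebesgue_on (QT T D). \<phi> z \<ge> 0) \<longrightarrow> \<eta> \<phi> \<ge> 0"
    and \<eta>u: "\<eta> u = 0" and u: "Xmem D T p u" and w: "Xmem D T p w"
    and le: "AE z in lebesgue_on (QT T D). w z \<le> c * u z"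
  shows "\<eta> w \<le> 0"
proof -
  define \<phi> where "\<phi> z = c * u z + (-1) * w z" for z
  have "Xmem D T p \<phi>"
    using u w Xrep_lincomb[OF D p] unfolding Xmem_def \<phi>_def[abs_def] by blast
  moreover have "AE z in lebesgue_on (QT T D). \<phi> z \<ge> 0"
    using le by eventually_elim (simp add: \<phi>_def)
  ultimately have "0 \<le> \<eta> \<phi>" using \<eta>_nn by blast
  also have "\<eta> \<phi> = c * \<eta> u + (-1) * \<eta> w"
    using \<eta> u w unfolding Xdual_def \<phi>_def[abs_def] by blast
  finally show ?thesis using \<eta>u by simp
qed

theorem mainTheorem4:
  fixes D :: "'a::euclidean_space set"
    and T p \<delta> C5 :: real
    and n :: "real \<Rightarrow> real"
    and u v :: "real \<times> 'a \<Rightarrow> real"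
    and \<eta> :: "(real \<times> 'a \<Rightarrow> real) \<Rightarrow> real"
  assumes D: "lipschitz_domain D"
    and T: "T > 0"
    and p: "p \<ge> 2"
    and \<delta>: "\<delta> > 0"
    and n_smooth: "smooth_real n"
    and n_lin: "\<forall>r. r > \<delta> \<longrightarrow> n r = r - 2 * \<delta>"
    and n_even: "\<forall>r. n r = n (- r)"
    and n_d1: "\<forall>r. r \<ge> 0 \<longrightarrow> 0 \<le> deriv n r \<and> deriv n r \<le> 1"
    and C5: "C5 > 0"
    and n_d2: "\<forall>r. 0 \<le> deriv (deriv n) r \<and> deriv (deriv n) r \<le> C5 / \<delta>"
    and u: "Xmem D T p u" and v: "Xmem D T p v"
    and u_nn: "AE z in lebesgue_on (QT T D). u z \<ge> 0"
    and v_nn: "AE z in lebesgue_on (QT T D). v z \<ge> 0"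
    and \<eta>: "Xdual D T p \<eta>"
    and \<eta>_nn: "\<forall>\<phi>. Xmem D T p \<phi> \<and> (AE z in lebesgue_on (QT T D). \<phi> z \<ge> 0) \<longrightarrow> \<eta> \<phi> \<ge> 0"
    and \<eta>u: "\<eta> u = 0"
  shows "Xmem D T p (\<lambda>z. deriv n (u z - v z)) \<and> \<eta> (\<lambda>z. deriv n (u z - v z)) \<le> 0"
proof -
  have D': "open D" "bounded D" and p1: "1 \<le> p" using D p unfolding lipschitz_domain_def by auto
  define m where "m = deriv n"
  define c where "c = C5 / \<delta>"
  have m: "smooth_real m" "m 0 = 0" unfolding m_def
    using smooth_real_deriv[OF n_smooth] even_has_real_derivative_0[OF smooth_real_has_deriv[OF n_smooth]]
      n_even by metis+
  have m': "\<And>r. 0 \<le> deriv m r \<and> deriv m r \<le> c" using n_d2 unfolding m_def c_def by blast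
  then have c: "\<And>r. \<bar>deriv m r\<bar> \<le> c" by (simp add: abs_le_iff)
  obtain Gu Gv where Gu: "Xrep D T p u Gu" and Gv: "Xrep D T p v Gv"
    using u v unfolding Xmem_def by blast
  have "Xrep D T p (\<lambda>z. u z - v z) (\<lambda>z. Gu z - Gv z)"
    using Xrep_lincomb[OF D' p1 Gu Gv, of 1 "-1"] by simp
  then have w: "Xmem D T p (\<lambda>z. m (u z - v z))"
    using Xrep_comp[OF D' p1 m c] unfolding Xmem_def by blast
  have "AE z in lebesgue_on (QT T D). m (u z - v z) \<le> c * u z"
    using u_nn v_nn by eventually_elim (rule monotone_deriv_comp_diff_le[OF m m'])
  with Xdual_positive_vanishing[OF D' p1 \<eta> \<eta>_nn \<eta>u u w] w show ?thesis
    unfolding m_def by blast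
qed

end
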